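(* Let $G_1$ be an $r_1$-regular finite simple graph and $G_2$ an $r_2$-regular finite simple graph with $r_1>r_2$, and let $p_i=|V(G_i)|$, $q_i=|E(G_i)|$ for $i=1,2$. Then $$\nu^*(G_1\sqcup G_2)=\nu^*(G_1)+\nu^*(G_2)+2q_1(p_2+q_2),$$ where $\sqcup$ denotes disjoint union.
   Context: For a finite simple graph $G=(V,E)$ with $\ell=|V|+|E|$, a construction sequence (c-sequence) is a bijection $x:\{1,\dots,\ell\}\to V\sqcup E$ such that every edge $e=uw$ satisfies $x^{-1}(e)>\max\{x^{-1}(u),x^{-1}(w)\}$. The cost of $x$ is $\nu(x)=\sum_{e=uw\in E}\big(2x^{-1}(e)-x^{-1}(u)-x^{-1}(w)\big)$, and $\nu^*(G)$ is the maximum of $\nu(x)$ over all c-sequences for $G$. *)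

theory Defs
  imports Main
begin

definition simple_graph :: "'a set \<Rightarrow> 'a set set \<Rightarrow> bool" where
  "simple_graph V E \<longleftrightarrow> finite V \<and>
     (\<forall>e\<in>E. \<exists>u v. u \<in> V \<and> v \<in> V \<and> u \<noteq> v \<and> e = {u, v})"

definition regular :: "'a set \<Rightarrow> 'a set set \<Rightarrow> nat \<Rightarrow> bool" where
  "regular V E r \<longleftrightarrow> (\<forall>v\<in>V. card {e\<in>E. v \<in> e} = r)"

definition elems :: "'a set \<Rightarrow> 'a set set \<Rightarrow> ('a + 'a set) set" where
  "elems V E = Inl ` V \<union> Inr ` E"

definition cseq :: "'a set \<Rightarrow> 'a set set \<Rightarrow> (nat \<Rightarrow> 'a + 'a set) \<Rightarrow> bool" where
  "cseq V E x \<longleftrightarrow> bij_betw x {1..card V + card E} (elems V E) \<and>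
     (\<forall>e\<in>E. \<forall>u\<in>e. inv_into {1..card V + card E} x (Inl u)
                    < inv_into {1..card V + card E} x (Inr e))"

definition cost :: "'a set \<Rightarrow> 'a set set \<Rightarrow> (nat \<Rightarrow> 'a + 'a set) \<Rightarrow> int" where
  "cost V E x = (let pos = inv_into {1..card V + card E} x in
     (\<Sum>e\<in>E. 2 * int (pos (Inr e)) - (\<Sum>u\<in>e. int (pos (Inl u)))))"

definition nu_star :: "'a set \<Rightarrow> 'a set set \<Rightarrow> int" where
  "nu_star V E = Max {cost V E x | x. cseq V E x}"

definition du_V :: "'a set \<Rightarrow> 'b set \<Rightarrow> ('a + 'b) set" where
  "du_V V1 V2 = Inl ` V1 \<union> Inr ` V2"

definition du_E :: "'a set set \<Rightarrow> 'b set set \<Rightarrow> ('a + 'b) set set" where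
  "du_E E1 E2 = (\<lambda>e. Inl ` e) ` E1 \<union> (\<lambda>e. Inr ` e) ` E2"

end

theory Submission
  imports Defs
begin

(*
  Write pos for the inverse of a construction sequence. Double counting turns the cost into
  2 (sum of pos e over edges) - (sum of deg v * pos v over vertices), and since the positions of
  vertices and edges together exhaust {1..N}, for a graph whose vertices have degree r1 on W and
  r2 <= r1 elsewhere the cost is
    2 (1 + ... + N) - (r1 - r2) (sum of pos over W) - (r2 + 2) (sum of pos over V).
  Both sums are minimised, simultaneously, by listing W first, then the other vertices, then the
  edges; this gives a closed formula for nu*. Applying it to G1, G2 and to the disjoint union with
  W = V(G1) (this is where r1 > r2 is needed), the theorem becomes a polynomial identity modulo the
  handshake relations r_i p_i = 2 q_i.
*)

abbreviation degree :: "'a set set \<Rightarrow> 'a \<Rightarrow> nat" where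
  "degree E v \<equiv> card {e \<in> E. v \<in> e}"

abbreviation position :: "'a set \<Rightarrow> 'a set set \<Rightarrow> (nat \<Rightarrow> 'a + 'a set) \<Rightarrow> 'a + 'a set \<Rightarrow> nat"
  where "position V E x \<equiv> inv_into {1..card V + card E} x"

lemma simple_graph_edgeE:
  assumes "simple_graph V E" "e \<in> E"
  obtains u v where "u \<in> V" "v \<in> V" "u \<noteq> v" "e = {u, v}"
  using assms unfolding simple_graph_def by blast

lemma simple_graph_finite_vertices: "simple_graph V E \<Longrightarrow> finite V"
  unfolding simple_graph_def by blast

lemma simple_graph_edge_subset: "simple_graph V E \<Longrightarrow> e \<in> E \<Longrightarrow> e \<subseteq> V"
  by (auto elim: simple_graph_edgeE)

lemma simple_graph_finite_edges: "simple_graph V E \<Longrightarrow> finite E"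
  by (rule finite_subset[of E "Pow V"])
    (auto dest: simple_graph_edge_subset simple_graph_finite_vertices)

lemma simple_graph_card_edge: "simple_graph V E \<Longrightarrow> e \<in> E \<Longrightarrow> card e = 2"
  by (auto elim: simple_graph_edgeE)

lemma sum_edges_endpoints:
  fixes f :: "'a \<Rightarrow> 'b::comm_semiring_1"
  assumes "simple_graph V E"
  shows "(\<Sum>e\<in>E. \<Sum>u\<in>e. f u) = (\<Sum>v\<in>V. of_nat (degree E v) * f v)"
proof -
  have "(\<Sum>e\<in>E. \<Sum>u\<in>e. f u) = (\<Sum>e\<in>E. \<Sum>u\<in>{v. v \<in> V \<and> v \<in> e}. f u)"
    using simple_graph_edge_subset[OF assms] by (intro sum.cong) auto
  also have "\<dots> = (\<Sum>v\<in>V. \<Sum>e\<in>{e. e \<in> E \<and> v \<in> e}. f v)"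
    using simple_graph_finite_edges[OF assms] simple_graph_finite_vertices[OF assms]
    by (rule sum.swap_restrict)
  finally show ?thesis by simp
qed

lemma regular_handshake:
  assumes "simple_graph V E" "regular V E r"
  shows "r * card V = 2 * card E"
proof -
  have "r * card V = (\<Sum>v\<in>V. degree E v)"
    using assms(2) unfolding regular_def by simp
  also have "\<dots> = (\<Sum>e\<in>E. card e)"
    using sum_edges_endpoints[OF assms(1), of "\<lambda>_. 1::nat"] by simp
  also have "\<dots> = 2 * card E"
    using simple_graph_card_edge[OF assms(1)] by simp
  finally show ?thesis .
qed

lemma sum_atLeastAtMost_card_le:
  fixes A :: "nat set"
  assumes "finite A" "0 \<notin> A"
  shows "\<Sum>{1..card A} \<le> \<Sum>A"
  using assms
proof (induction A rule: finite_linorder_max_induct)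
  case empty
  then show ?case by simp
next
  case (insert b A)
  have "b \<notin> A" using insert.hyps(2) by blast
  have "A \<subseteq> {1..<b}" using insert.hyps(2) insert.prems(1) by (auto simp: Suc_le_eq) (metis gr0I)
  then have "card A < b"
    using card_mono[of "{1..<b}" A] insert.prems(1) by fastforce
  have "\<Sum>{1..card (insert b A)} = \<Sum>{1..card A} + Suc (card A)"
    using insert.hyps(1) \<open>b \<notin> A\<close> by simp
  also have "\<dots> \<le> \<Sum>A + b"
    using insert.IH insert.prems(1) \<open>card A < b\<close> by simp
  also have "\<dots> = \<Sum>(insert b A)"
    using insert.hyps(1) \<open>b \<notin> A\<close> by simp
  finally show ?case .
qed

lemma double_sum_atLeastAtMost: "2 * int (\<Sum>{1..n}) = int n * (int n + 1)"
  using double_gauss_sum_from_Suc_0[of n, where 'a = int] by (simp add: of_nat_sum)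

lemma ex_bij_betw_greaterThanAtMost:
  fixes k :: nat
  assumes "finite A"
  obtains f where "bij_betw f A {k<..k + card A}"
  using finite_same_card_bij[OF assms, of "{k<..k + card A}"] that by auto

lemma bij_betw_extend_greaterThanAtMost:
  fixes k :: nat
  assumes f: "bij_betw f A {k<..k + card A}" and "finite B" "A \<inter> B = {}"
  obtains g where "bij_betw g (A \<union> B) {k<..k + card A + card B}" "\<And>a. a \<in> A \<Longrightarrow> g a = f a"
proof -
  obtain h where h: "bij_betw h B {k + card A<..k + card A + card B}"
    using ex_bij_betw_greaterThanAtMost[OF \<open>finite B\<close>] .
  have "bij_betw (\<lambda>z. if z \<in> A then f z else h z) (A \<union> B)
          ({k<..k + card A} \<union> {k + card A<..k + card A + card B})"
    using bij_betw_disjoint_Un[OF f h] \<open>A \<inter> B = {}\<close> by auto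
  moreover have "{k<..k + card A} \<union> {k + card A<..k + card A + card B} = {k<..k + card A + card B}"
    by auto
  ultimately show ?thesis using that by auto
qed

lemma ex_bij_betw_nested_blocks:
  fixes A B C :: "'a set"
  assumes fin: "finite A" "finite B" "finite C" and disj: "A \<inter> B = {}" "(A \<union> B) \<inter> C = {}"
  obtains p where "bij_betw p (A \<union> B \<union> C) {0<..card A + card B + card C}"
    "p ` A = {0<..card A}" "p ` (A \<union> B) = {0<..card A + card B}"
proof -
  obtain p1 where p1: "bij_betw p1 A {0<..0 + card A}"
    using ex_bij_betw_greaterThanAtMost[OF fin(1)] .
  obtain p2 where p2: "bij_betw p2 (A \<union> B) {0<..0 + card A + card B}"
      and p21: "\<And>z. z \<in> A \<Longrightarrow> p2 z = p1 z"
    using bij_betw_extend_greaterThanAtMost[OF p1 fin(2) disj(1)] by blast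
  have card_AB: "card (A \<union> B) = card A + card B"
    using fin disj by (simp add: card_Un_disjoint)
  obtain p where p: "bij_betw p (A \<union> B \<union> C) {0<..0 + card (A \<union> B) + card C}"
      and p32: "\<And>z. z \<in> A \<union> B \<Longrightarrow> p z = p2 z"
    using bij_betw_extend_greaterThanAtMost[of p2 "A \<union> B" 0 C] p2 card_AB fin(3) disj(2) by auto
  have "p ` A = p1 ` A"
    using p21 p32 by (intro image_cong) auto
  moreover have "p ` (A \<union> B) = p2 ` (A \<union> B)"
    using p32 by (rule image_cong[OF refl])
  ultimately show ?thesis
    using that p card_AB bij_betw_imp_surj_on[OF p1] bij_betw_imp_surj_on[OF p2] by simp
qed

lemma cseq_position_bij:
  "cseq V E x \<Longrightarrow> bij_betw (position V E x) (elems V E) {1..card V + card E}"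
  unfolding cseq_def by (simp add: bij_betw_inv_into)

lemma cseq_position_less:
  "cseq V E x \<Longrightarrow> e \<in> E \<Longrightarrow> u \<in> e \<Longrightarrow> position V E x (Inl u) < position V E x (Inr e)"
  unfolding cseq_def by blast

lemma cseq_of_vertices_first_positions:
  assumes g: "simple_graph V E" and p: "bij_betw p (elems V E) {1..card V + card E}"
    and pV: "p ` Inl ` V = {1..card V}"
  obtains x where "cseq V E x" "\<And>z. z \<in> elems V E \<Longrightarrow> position V E x z = p z"
proof
  define x where "x = inv_into (elems V E) p"
  show pos: "position V E x z = p z" if "z \<in> elems V E" for z
    unfolding x_def using inv_into_inv_into_eq[OF p that] .
  have "position V E x (Inl u) < position V E x (Inr e)" if "e \<in> E" "u \<in> e" for e u
  proof -
    have u: "Inl u \<in> Inl ` V" and e: "Inr e \<in> elems V E" "Inr e \<notin> Inl ` V"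
      using that simple_graph_edge_subset[OF g] unfolding elems_def by auto
    have "p (Inl u) \<in> {1..card V}"
      using imageI[OF u, of p] unfolding pV .
    moreover have "p (Inr e) \<notin> {1..card V}"
      using inj_on_image_mem_iff[OF bij_betw_imp_inj_on[OF p] e(1)] e(2)
      unfolding pV[symmetric] elems_def by blast
    moreover have "p (Inr e) \<in> {1..card V + card E}"
      using bij_betw_apply[OF p e(1)] .
    ultimately show ?thesis
      using pos u e(1) unfolding elems_def by auto
  qed
  then show "cseq V E x"
    unfolding cseq_def using bij_betw_inv_into[OF p] unfolding x_def by blast
qed

lemma cost_nonneg:
  assumes g: "simple_graph V E" and x: "cseq V E x"
  shows "0 \<le> cost V E x"
  unfolding cost_def Let_def
proof (rule sum_nonneg)
  fix e assume e: "e \<in> E"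
  then obtain u w where "u \<noteq> w" "e = {u, w}" using g by (auto elim: simple_graph_edgeE)
  moreover have "position V E x (Inl u) < position V E x (Inr e)"
    "position V E x (Inl w) < position V E x (Inr e)"
    using cseq_position_less[OF x e] \<open>e = {u, w}\<close> by auto
  ultimately show "0 \<le> 2 * int (position V E x (Inr e)) - (\<Sum>u\<in>e. int (position V E x (Inl u)))"
    by simp
qed

lemma cost_eq_degrees:
  assumes "simple_graph V E"
  shows "cost V E x = 2 * (\<Sum>e\<in>E. int (position V E x (Inr e)))
    - (\<Sum>v\<in>V. int (degree E v) * int (position V E x (Inl v)))"
  unfolding cost_def Let_def
  using sum_edges_endpoints[OF assms, of "\<lambda>u. int (position V E x (Inl u))"]
  by (simp add: sum_subtractf sum_distrib_left)

lemma cseq_inj_on_position_Inl: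
  assumes x: "cseq V E x" and "W \<subseteq> V"
  shows "inj_on (position V E x \<circ> Inl) W"
proof -
  have "inj_on (position V E x) (Inl ` W)"
    using cseq_position_bij[OF x] \<open>W \<subseteq> V\<close> unfolding elems_def bij_betw_def
    by (auto intro: inj_on_subset)
  then show ?thesis
    by (simp add: comp_inj_on_iff)
qed

lemma sum_position_vertices:
  assumes x: "cseq V E x" and W: "W \<subseteq> V"
  shows "(\<Sum>v\<in>W. position V E x (Inl v)) = \<Sum>((position V E x \<circ> Inl) ` W)"
  using sum.reindex[OF cseq_inj_on_position_Inl[OF x W], of id] by simp

lemma sum_position_vertices_ge:
  assumes x: "cseq V E x" and W: "W \<subseteq> V"
  shows "\<Sum>{1..card W} \<le> (\<Sum>v\<in>W. position V E x (Inl v))"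
proof -
  let ?P = "(position V E x \<circ> Inl) ` W"
  have "?P \<subseteq> {1..card V + card E}"
    using cseq_position_bij[OF x] W unfolding elems_def bij_betw_def by auto
  then have "\<Sum>{1..card ?P} \<le> \<Sum>?P"
    by (intro sum_atLeastAtMost_card_le) (auto intro: finite_subset)
  then show ?thesis
    using card_image[OF cseq_inj_on_position_Inl[OF x W]] sum_position_vertices[OF x W] by simp
qed

lemma sum_position_vertices_edges:
  assumes g: "simple_graph V E" and x: "cseq V E x"
  shows "(\<Sum>v\<in>V. position V E x (Inl v)) + (\<Sum>e\<in>E. position V E x (Inr e))
    = \<Sum>{1..card V + card E}"
proof -
  have "\<Sum>{1..card V + card E} = (\<Sum>z\<in>elems V E. position V E x z)"
    using sum.reindex_bij_betw[OF cseq_position_bij[OF x], of id] by simp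
  also have "\<dots> = (\<Sum>z\<in>Inl ` V. position V E x z) + (\<Sum>z\<in>Inr ` E. position V E x z)"
    unfolding elems_def using simple_graph_finite_vertices[OF g] simple_graph_finite_edges[OF g]
    by (subst sum.union_disjoint) auto
  finally show ?thesis
    by (simp add: sum.reindex)
qed

lemma ex_cseq_vertices_first:
  assumes g: "simple_graph V E" and W: "W \<subseteq> V"
  obtains x where "cseq V E x"
    "(position V E x \<circ> Inl) ` W = {1..card W}" "(position V E x \<circ> Inl) ` V = {1..card V}"
proof -
  let ?A = "Inl ` W :: ('a + 'a set) set"
    and ?B = "Inl ` (V - W) :: ('a + 'a set) set" and ?C = "Inr ` E :: ('a + 'a set) set"
  have fin: "finite V" "finite E" "finite W"
    using g W by (auto intro: finite_subset simple_graph_finite_vertices simple_graph_finite_edges)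
  have finABC: "finite ?A" "finite ?B" "finite ?C"
    using fin by simp_all
  have disj: "?A \<inter> ?B = {}" "(?A \<union> ?B) \<inter> ?C = {}"
    by auto
  have AB: "?A \<union> ?B = Inl ` V" and ABC: "Inl ` V \<union> ?C = elems V E"
    unfolding elems_def using W by auto
  have cards: "card ?A = card W" "card ?A + card ?B = card V" "card ?C = card E"
    using fin card_mono[OF fin(1) W] by (simp_all add: card_image card_Diff_subset W)
  obtain p where p: "bij_betw p (?A \<union> ?B \<union> ?C) {0<..card ?A + card ?B + card ?C}"
    and pA: "p ` ?A = {0<..card ?A}" and pAB: "p ` (?A \<union> ?B) = {0<..card ?A + card ?B}"
    using ex_bij_betw_nested_blocks[OF finABC disj] .
  have p': "bij_betw p (elems V E) {1..card V + card E}" "p ` Inl ` V = {1..card V}"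
    using p pAB unfolding AB ABC cards(2,3) by (simp_all add: atLeastSucAtMost_greaterThanAtMost)
  obtain x where x: "cseq V E x" and pos: "\<And>z. z \<in> elems V E \<Longrightarrow> position V E x z = p z"
    using cseq_of_vertices_first_positions[OF g p'] by blast
  have "(position V E x \<circ> Inl) ` S = p ` Inl ` S" if "S \<subseteq> V" for S
    using pos that unfolding elems_def by force
  then show ?thesis
    using that x pA p'(2) W cards(1) by (simp add: atLeastSucAtMost_greaterThanAtMost)
qed

lemma nu_star_eqI:
  assumes g: "simple_graph V E" and x0: "cseq V E x0"
    and le: "\<And>x. cseq V E x \<Longrightarrow> cost V E x \<le> cost V E x0"
  shows "nu_star V E = cost V E x0"
  unfolding nu_star_def
proof (rule Max_eqI)
  show "finite {cost V E x |x. cseq V E x}"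
    by (rule finite_subset[of _ "{0..cost V E x0}"]) (auto intro: cost_nonneg[OF g] le)
qed (use x0 le in auto)

lemma cost_two_degrees:
  assumes g: "simple_graph V E" and W: "W \<subseteq> V"
    and deg_W: "\<And>v. v \<in> W \<Longrightarrow> degree E v = r1"
    and deg_rest: "\<And>v. v \<in> V - W \<Longrightarrow> degree E v = r2"
    and x: "cseq V E x"
  shows "cost V E x = 2 * int (\<Sum>{1..card V + card E})
    - (int r1 - int r2) * int (\<Sum>v\<in>W. position V E x (Inl v))
    - (int r2 + 2) * int (\<Sum>v\<in>V. position V E x (Inl v))"
proof -
  let ?p = "\<lambda>v. int (position V E x (Inl v))"
  have fin: "finite V" using g by (rule simple_graph_finite_vertices)
  have split: "(\<Sum>v\<in>V. h v) = (\<Sum>v\<in>W. h v) + (\<Sum>v\<in>V - W. h v)" for h :: "'a \<Rightarrow> int"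
    using sum.subset_diff[OF W fin] by (simp add: add.commute)
  have "(\<Sum>v\<in>V. int (degree E v) * ?p v) = (\<Sum>v\<in>W. int r1 * ?p v) + (\<Sum>v\<in>V - W. int r2 * ?p v)"
    unfolding split[of "\<lambda>v. int (degree E v) * ?p v"] using deg_W deg_rest by simp
  also have "\<dots> = (int r1 - int r2) * (\<Sum>v\<in>W. ?p v) + int r2 * (\<Sum>v\<in>V. ?p v)"
    unfolding split[of ?p] sum_distrib_left[symmetric] by (simp add: algebra_simps)
  finally have "(\<Sum>v\<in>V. int (degree E v) * ?p v)
      = (int r1 - int r2) * (\<Sum>v\<in>W. ?p v) + int r2 * (\<Sum>v\<in>V. ?p v)" .
  moreover have "(\<Sum>e\<in>E. int (position V E x (Inr e))) = int (\<Sum>{1..card V + card E}) - (\<Sum>v\<in>V. ?p v)"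
    using arg_cong[OF sum_position_vertices_edges[OF g x], of int] by simp
  ultimately show ?thesis
    unfolding cost_eq_degrees[OF g] by (simp add: algebra_simps)
qed

lemma nu_star_two_degrees:
  assumes g: "simple_graph V E" and W: "W \<subseteq> V"
    and deg_W: "\<And>v. v \<in> W \<Longrightarrow> degree E v = r1"
    and deg_rest: "\<And>v. v \<in> V - W \<Longrightarrow> degree E v = r2"
    and "r2 \<le> r1"
  shows "nu_star V E = 2 * int (\<Sum>{1..card V + card E})
    - (int r1 - int r2) * int (\<Sum>{1..card W}) - (int r2 + 2) * int (\<Sum>{1..card V})"
proof -
  have cost: "cost V E x = 2 * int (\<Sum>{1..card V + card E})
      - (int r1 - int r2) * int (\<Sum>v\<in>W. position V E x (Inl v))
      - (int r2 + 2) * int (\<Sum>v\<in>V. position V E x (Inl v))" if "cseq V E x" for x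
    using cost_two_degrees[OF g W _ _ that] deg_W deg_rest by blast
  obtain x0 where x0: "cseq V E x0"
    "(position V E x0 \<circ> Inl) ` W = {1..card W}" "(position V E x0 \<circ> Inl) ` V = {1..card V}"
    using ex_cseq_vertices_first[OF g W] .
  have opt: "cost V E x0 = 2 * int (\<Sum>{1..card V + card E})
    - (int r1 - int r2) * int (\<Sum>{1..card W}) - (int r2 + 2) * int (\<Sum>{1..card V})"
    using cost[OF x0(1)] sum_position_vertices[OF x0(1) W] sum_position_vertices[OF x0(1) order_refl]
    unfolding x0(2,3) by (simp only:)
  have "cost V E x \<le> cost V E x0" if x: "cseq V E x" for x
  proof -
    have "(int r1 - int r2) * int (\<Sum>{1..card W})
        \<le> (int r1 - int r2) * int (\<Sum>v\<in>W. position V E x (Inl v))"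
      using sum_position_vertices_ge[OF x W] \<open>r2 \<le> r1\<close> by (intro mult_left_mono) (simp_all del: of_nat_sum)
    moreover have "(int r2 + 2) * int (\<Sum>{1..card V})
        \<le> (int r2 + 2) * int (\<Sum>v\<in>V. position V E x (Inl v))"
      using sum_position_vertices_ge[OF x order_refl] by (intro mult_left_mono) (simp_all del: of_nat_sum)
    ultimately show ?thesis
      unfolding opt cost[OF x] by linarith
  qed
  then have "nu_star V E = cost V E x0"
    by (rule nu_star_eqI[OF g x0(1)])
  then show ?thesis
    using opt by simp
qed

corollary nu_star_regular:
  assumes "simple_graph V E" "regular V E r"
  shows "nu_star V E = 2 * int (\<Sum>{1..card V + card E}) - (int r + 2) * int (\<Sum>{1..card V})"
  using nu_star_two_degrees[OF assms(1) order_refl, of r r] assms(2)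
  unfolding regular_def by simp

lemma inj_image_Inl: "inj (\<lambda>e. Inl ` e :: ('a + 'b) set)"
  by (simp add: inj_def inj_image_eq_iff)

lemma inj_image_Inr: "inj (\<lambda>e. Inr ` e :: ('a + 'b) set)"
  by (simp add: inj_def inj_image_eq_iff)

lemma simple_graph_du:
  assumes "simple_graph V1 E1" "simple_graph V2 E2"
  shows "simple_graph (du_V V1 V2) (du_E E1 E2)"
  unfolding simple_graph_def
proof (intro conjI ballI)
  show "finite (du_V V1 V2)"
    using assms by (simp add: du_V_def simple_graph_finite_vertices)
  fix e assume "e \<in> du_E E1 E2"
  then consider e1 where "e1 \<in> E1" "e = Inl ` e1" | e2 where "e2 \<in> E2" "e = Inr ` e2"
    unfolding du_E_def by blast
  then show "\<exists>u v. u \<in> du_V V1 V2 \<and> v \<in> du_V V1 V2 \<and> u \<noteq> v \<and> e = {u, v}"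
  proof cases
    case 1
    then show ?thesis using assms(1)
      by (elim simple_graph_edgeE) (auto simp: du_V_def)
  next
    case 2
    then show ?thesis using assms(2)
      by (elim simple_graph_edgeE) (auto simp: du_V_def)
  qed
qed

lemma card_du_V:
  "finite V1 \<Longrightarrow> finite V2 \<Longrightarrow> card (du_V V1 V2) = card V1 + card V2"
  unfolding du_V_def by (subst card_Un_disjoint) (auto simp: card_image)

lemma card_du_E:
  assumes "simple_graph V1 E1" "simple_graph V2 E2"
  shows "card (du_E E1 E2) = card E1 + card E2"
proof -
  have "e1 \<noteq> {}" if "e1 \<in> E1" for e1
    using assms(1) that by (auto elim: simple_graph_edgeE)
  then have "(\<lambda>e. Inl ` e) ` E1 \<inter> (\<lambda>e. Inr ` e :: ('a + 'b) set) ` E2 = {}"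
    by fastforce
  then show ?thesis
    unfolding du_E_def
    using simple_graph_finite_edges[OF assms(1)] simple_graph_finite_edges[OF assms(2)]
    by (simp add: card_Un_disjoint card_image inj_on_subset[OF inj_image_Inl]
        inj_on_subset[OF inj_image_Inr])
qed

lemma degree_du_E_Inl: "degree (du_E E1 E2) (Inl v) = degree E1 v"
proof -
  have "{e \<in> du_E E1 E2. Inl v \<in> e} = (\<lambda>e. Inl ` e) ` {e \<in> E1. v \<in> e}"
    unfolding du_E_def by auto
  then show ?thesis
    by (simp add: card_image inj_on_subset[OF inj_image_Inl])
qed

lemma degree_du_E_Inr: "degree (du_E E1 E2) (Inr v) = degree E2 v"
proof -
  have "{e \<in> du_E E1 E2. Inr v \<in> e} = (\<lambda>e. Inr ` e) ` {e \<in> E2. v \<in> e}"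
    unfolding du_E_def by auto
  then show ?thesis
    by (simp add: card_image inj_on_subset[OF inj_image_Inr])
qed

lemma nu_star_du_regular:
  assumes "simple_graph V1 E1" "regular V1 E1 r1" "simple_graph V2 E2" "regular V2 E2 r2"
    and "r2 \<le> r1"
  shows "nu_star (du_V V1 V2) (du_E E1 E2)
    = 2 * int (\<Sum>{1..card V1 + card V2 + (card E1 + card E2)})
      - (int r1 - int r2) * int (\<Sum>{1..card V1}) - (int r2 + 2) * int (\<Sum>{1..card V1 + card V2})"
proof -
  have g: "simple_graph (du_V V1 V2) (du_E E1 E2)"
    using assms(1,3) by (rule simple_graph_du)
  have W: "Inl ` V1 \<subseteq> du_V V1 V2"
    unfolding du_V_def by blast
  have deg1: "degree (du_E E1 E2) v = r1" if "v \<in> Inl ` V1" for v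
    using that assms(2) by (auto simp: degree_du_E_Inl regular_def)
  have deg2: "degree (du_E E1 E2) v = r2" if "v \<in> du_V V1 V2 - Inl ` V1" for v
    using that assms(4) by (auto simp: du_V_def degree_du_E_Inr regular_def)
  show ?thesis
    using nu_star_two_degrees[OF g W deg1 deg2] assms(1,3,5)
    by (simp add: card_du_V card_du_E card_image simple_graph_finite_vertices del: of_nat_sum)
qed

theorem theorem5:
  fixes V1 :: "'a set" and E1 :: "'a set set" and V2 :: "'b set" and E2 :: "'b set set"
    and r1 r2 :: nat
  assumes "simple_graph V1 E1" and "regular V1 E1 r1"
    and "simple_graph V2 E2" and "regular V2 E2 r2"
    and "r1 > r2"
  shows "nu_star (du_V V1 V2) (du_E E1 E2)
           = nu_star V1 E1 + nu_star V2 E2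
             + 2 * int (card E1) * (int (card V2) + int (card E2))"
proof -
  have "int r1 * int (card V1) = 2 * int (card E1)" "int r2 * int (card V2) = 2 * int (card E2)"
    using regular_handshake[OF assms(1,2)] regular_handshake[OF assms(3,4)]
    by (simp_all flip: of_nat_mult)
  then have "2 * nu_star (du_V V1 V2) (du_E E1 E2)
      = 2 * (nu_star V1 E1 + nu_star V2 E2 + 2 * int (card E1) * (int (card V2) + int (card E2)))"
    using nu_star_du_regular[OF assms(1-4) less_imp_le[OF assms(5)]]
      nu_star_regular[OF assms(1,2)] nu_star_regular[OF assms(3,4)]
      double_sum_atLeastAtMost[of "card V1 + card V2 + (card E1 + card E2)"]
      double_sum_atLeastAtMost[of "card V1 + card V2"] double_sum_atLeastAtMost[of "card V1"]
      double_sum_atLeastAtMost[of "card V1 + card E1"] double_sum_atLeastAtMost[of "card V2 + card E2"]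
      double_sum_atLeastAtMost[of "card V2"]
    unfolding of_nat_add by algebra
  then show ?thesis
    by simp
qed

end
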